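(* (i) The admissible monomials of weight vector $(3)|^1$ in $P_5$ are exactly $X_{\alpha,\beta}$, $1\le\alpha<\beta\le5$; hence $\dim QP_5((3)|^1)=10$. (ii) The admissible monomials of weight vector $(3)|^2$ in $P_5$ in which every variable occurs are exactly the following 15: $x_1x_2x_3^{2}x_4^{2}x_5^{3}$, $x_1x_2x_3^{2}x_4^{3}x_5^{2}$, $x_1x_2x_3^{3}x_4^{2}x_5^{2}$, $x_1x_2^{2}x_3x_4^{2}x_5^{3}$, $x_1x_2^{2}x_3x_4^{3}x_5^{2}$, $x_1x_2^{2}x_3^{2}x_4x_5^{3}$, $x_1x_2^{2}x_3^{2}x_4^{3}x_5$, $x_1x_2^{2}x_3^{3}x_4x_5^{2}$, $x_1x_2^{2}x_3^{3}x_4^{2}x_5$, $x_1x_2^{3}x_3x_4^{2}x_5^{2}$, $x_1x_2^{3}x_3^{2}x_4x_5^{2}$, $x_1x_2^{3}x_3^{2}x_4^{2}x_5$, $x_1^{3}x_2x_3x_4^{2}x_5^{2}$, $x_1^{3}x_2x_3^{2}x_4x_5^{2}$, $x_1^{3}x_2x_3^{2}x_4^{2}x_5$. Consequently $\dim QP_5((3)|^2)=55$.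
   Context: $P_5=\mathbb F_2[x_1,\dots,x_5]$, $\deg x_i=1$, a module over the mod-2 Steenrod algebra $\mathcal A$ with augmentation ideal $\mathcal A^+$; $f\equiv g$ means $f+g\in\mathcal A^+P_5$. $X_{\alpha,\beta}=\prod_{l\in\{1,\dots,5\}\setminus\{\alpha,\beta\}}x_l$. For $x=x_1^{a_1}\cdots x_5^{a_5}$: weight vector $\omega_i(x)=\sum_j\alpha_{i-1}(a_j)$ ($\alpha_r(a)$ the $r$-th binary digit), exponent vector $\sigma(x)=(a_1,\dots,a_5)$, both ordered left-lexicographically; $\deg\omega=\sum_i2^{i-1}\omega_i$. For monomials of equal degree, $x<y$ iff $\omega(x)<\omega(y)$, or $\omega(x)=\omega(y)$ and $\sigma(x)<\sigma(y)$; $x$ is inadmissible if $x\equiv\sum_jy_j$ with monomials $y_j<x$, otherwise admissible. $(3)|^d$ is the weight vector with first $d$ entries $3$ and rest $0$. $P_5(\omega)$ is spanned by monomials $y$ with $\deg y=\deg\omega$ and $\omega(y)\le\omega$, $P_5^-(\omega)$ by those with $\omega(y)<\omega$, and $QP_5(\omega)=P_5(\omega)/(P_5(\omega)\cap(\mathcal A^+P_5+P_5^-(\omega)))$. *)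

theory Defs
  imports Main
begin

text \<open>Monomials of P_5 are exponent lists of length 5 (entry j is the exponent of x_(j+1)).
  Polynomials over F_2 are finite sets of monomials; addition is symmetric difference.\<close>

type_synonym mono = "nat list"
type_synonym poly = "nat list set"

definition padd :: "poly \<Rightarrow> poly \<Rightarrow> poly" where
  "padd p q = (p - q) \<union> (q - p)"

inductive_set f2span :: "poly set \<Rightarrow> poly set" for S where
  zero: "{} \<in> f2span S"
| add: "p \<in> f2span S \<Longrightarrow> s \<in> S \<Longrightarrow> padd p s \<in> f2span S"

text \<open>Sq^k on a monomial, via Sq^k(x^n) = (n choose k) x^(n+k) and the Cartan formula, mod 2.\<close>
definition sq :: "nat \<Rightarrow> mono \<Rightarrow> poly" where
  "sq k a = {b. length b = length a \<and>
      (\<forall>j<length a. a!j \<le> b!j \<and> odd ((a!j) choose (b!j - a!j))) \<and>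
      sum_list b = sum_list a + k}"

definition hitgens :: "poly set" where
  "hitgens = {sq i a | i a. 0 < i \<and> length a = 5}"

definition hit :: "poly set" where
  "hit = f2span hitgens"

text \<open>Weight vector: weight a i = omega_(i+1)(a) = sum_j alpha_i(a_j).\<close>
definition weight :: "mono \<Rightarrow> nat \<Rightarrow> nat" where
  "weight a i = (\<Sum>j<length a. (a!j div 2^i) mod 2)"

definition wdeg :: "(nat \<Rightarrow> nat) \<Rightarrow> nat" where
  "wdeg w = (\<Sum>i\<in>{i. w i \<noteq> 0}. 2^i * w i)"

definition wlt :: "(nat \<Rightarrow> nat) \<Rightarrow> (nat \<Rightarrow> nat) \<Rightarrow> bool" where
  "wlt v w \<longleftrightarrow> (\<exists>k. v k < w k \<and> (\<forall>i<k. v i = w i))"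

definition wle :: "(nat \<Rightarrow> nat) \<Rightarrow> (nat \<Rightarrow> nat) \<Rightarrow> bool" where
  "wle v w \<longleftrightarrow> v = w \<or> wlt v w"

definition lexlt :: "mono \<Rightarrow> mono \<Rightarrow> bool" where
  "lexlt x y \<longleftrightarrow> (\<exists>k<length x. x!k < y!k \<and> (\<forall>i<k. x!i = y!i))"

definition mless :: "mono \<Rightarrow> mono \<Rightarrow> bool" where
  "mless x y \<longleftrightarrow> wlt (weight x) (weight y) \<or> (weight x = weight y \<and> lexlt x y)"

definition inadmissible :: "mono \<Rightarrow> bool" where
  "inadmissible x \<longleftrightarrow> (\<exists>Y. finite Y \<and>
      (\<forall>y\<in>Y. length y = 5 \<and> sum_list y = sum_list x \<and> mless y x) \<and>
      padd {x} Y \<in> hit)"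

definition admissible :: "mono \<Rightarrow> bool" where
  "admissible x \<longleftrightarrow> length x = 5 \<and> \<not> inadmissible x"

definition w3 :: "nat \<Rightarrow> nat \<Rightarrow> nat" where
  "w3 d = (\<lambda>i. if i < d then 3 else 0)"

definition P5w :: "(nat \<Rightarrow> nat) \<Rightarrow> poly set" where
  "P5w w = {p. finite p \<and> (\<forall>y\<in>p. length y = 5 \<and> sum_list y = wdeg w \<and> wle (weight y) w)}"

definition P5minus_gens :: "(nat \<Rightarrow> nat) \<Rightarrow> poly set" where
  "P5minus_gens w = {{y} | y. length y = 5 \<and> sum_list y = wdeg w \<and> wlt (weight y) w}"

definition qdim :: "poly set \<Rightarrow> poly set \<Rightarrow> nat" where
  "qdim W U = (LEAST n. \<exists>S. finite S \<and> card S = n \<and> S \<subseteq> W \<and>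
       W \<subseteq> {padd s u | s u. s \<in> f2span S \<and> u \<in> U})"

definition QP5dim :: "(nat \<Rightarrow> nat) \<Rightarrow> nat" where
  "QP5dim w = qdim (P5w w) (P5w w \<inter> f2span (hitgens \<union> P5minus_gens w))"

definition Xab :: "nat \<Rightarrow> nat \<Rightarrow> mono" where
  "Xab \<alpha> \<beta> = map (\<lambda>l. if l = \<alpha> \<or> l = \<beta> then 0 else 1) [1..<6]"

end

theory Submission
  imports Defs "HOL-Library.List_Lexorder"
begin

text \<open>An admissible monomial \<open>x\<close> is certified by a finite set \<open>T\<close> of monomials that contains
  \<open>x\<close> but nothing smaller than \<open>x\<close>, and in which every \<open>Sq\<^sup>i y\<close> with \<open>i > 0\<close> has an even number
  of terms: the sum of the coefficients over \<open>T\<close> is then a functional that kills \<open>\<A>\<^sup>+P\<^sub>5\<close> and all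
  monomials below \<open>x\<close>, but not \<open>x\<close>. An inadmissible monomial is certified as the leading term of
  some \<open>Sq\<^sup>i y\<close>. Since an inadmissible monomial is a hit polynomial plus smaller monomials,
  induction along the order of monomials shows that \<open>QP\<^sub>5(\<omega>)\<close> is spanned by the admissible
  monomials of weight \<open>\<omega>\<close>; their functionals are triangular with respect to the lexicographic
  order, so these monomials are also independent. For \<open>\<omega> = (3)|\<^sup>1\<close> and \<open>(3)|\<^sup>2\<close> the
  certificates are listed explicitly and checked by evaluation, along with the fact that every
  monomial of weight \<open>\<omega>\<close> carries one of them.\<close>

section \<open>Spans over \<open>\<bbbF>\<^sub>2\<close> and parity functionals\<close>

lemma padd_iff: "x \<in> padd p q \<longleftrightarrow> (x \<in> p) \<noteq> (x \<in> q)"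
  by (auto simp: padd_def)

lemma padd_empty [simp]: "padd {} q = q" "padd p {} = p" "padd p p = {}"
  by (auto simp: padd_def)

lemma padd_assoc: "padd (padd p q) r = padd p (padd q r)"
  by (rule set_eqI) (simp add: padd_iff, blast)

lemma padd_commute: "padd p q = padd q p"
  by (auto simp: padd_def)

lemma padd_left_commute: "padd p (padd q r) = padd q (padd p r)"
  by (rule set_eqI) (simp add: padd_iff, blast)

lemmas padd_ac = padd_assoc padd_commute padd_left_commute

lemma padd_cancel_right: "padd (padd p q) q = p"
  by (simp add: padd_assoc)

lemma f2span_base: "s \<in> S \<Longrightarrow> s \<in> f2span S"
  using f2span.add[OF f2span.zero] by simp

lemma f2span_padd:
  assumes "p \<in> f2span S" "q \<in> f2span S"
  shows "padd p q \<in> f2span S"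
  using assms(2)
proof (induction q rule: f2span.induct)
  case (add q s)
  then show ?case by (metis f2span.add padd_assoc)
qed (simp add: assms(1))

lemma f2span_mono: "p \<in> f2span S \<Longrightarrow> S \<subseteq> S' \<Longrightarrow> p \<in> f2span S'"
  by (induction p rule: f2span.induct) (auto intro: f2span.intros)

lemma f2span_finite_sum:
  assumes "finite A" "\<And>x. x \<in> A \<Longrightarrow> {x} \<in> f2span S"
  shows "A \<in> f2span S"
  using assms
proof (induction A rule: finite_induct)
  case (insert x F)
  have "insert x F = padd F {x}" using insert.hyps by (auto simp: padd_def)
  moreover have "F \<in> f2span S" "{x} \<in> f2span S" using insert by auto
  ultimately show ?case by (simp add: f2span_padd)
qed (simp add: f2span.zero)

lemma f2span_insert_subset: "f2span (insert s S) \<subseteq> f2span S \<union> (\<lambda>p. padd p s) ` f2span S"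
proof
  fix p assume "p \<in> f2span (insert s S)"
  then show "p \<in> f2span S \<union> (\<lambda>p. padd p s) ` f2span S"
  proof (induction p rule: f2span.induct)
    case zero
    then show ?case by (simp add: f2span.zero)
  next
    case (add p t)
    from add.IH consider "p \<in> f2span S" | q where "q \<in> f2span S" "p = padd q s"
      by blast
    then show ?case
    proof cases
      case 1
      then show ?thesis using add.hyps(2) f2span.add by blast
    next
      case 2
      show ?thesis
      proof (cases "t = s")
        case True
        then show ?thesis using 2 by (simp add: padd_cancel_right)
      next
        case False
        then have "padd q t \<in> f2span S" using 2 add.hyps(2) f2span.add by blast
        moreover have "padd p t = padd (padd q t) s"
          using 2 by (simp add: padd_ac)
        ultimately show ?thesis by blast
      qed
    qed
  qed
qed

lemma finite_f2span: "finite S \<Longrightarrow> finite (f2span S) \<and> card (f2span S) \<le> 2 ^ card S"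
proof (induction S rule: finite_induct)
  case empty
  have "f2span {} = {{}}" by (auto elim: f2span.cases intro: f2span.zero)
  then show ?case by simp
next
  case (insert s S)
  let ?V = "f2span S"
  have fin: "finite (?V \<union> (\<lambda>p. padd p s) ` ?V)" using insert.IH by simp
  have "card (f2span (insert s S)) \<le> card (?V \<union> (\<lambda>p. padd p s) ` ?V)"
    using fin by (intro card_mono f2span_insert_subset)
  also have "\<dots> \<le> card ?V + card ((\<lambda>p. padd p s) ` ?V)" by (rule card_Un_le)
  also have "\<dots> \<le> card ?V + card ?V" using card_image_le insert.IH by auto
  finally show ?case
    using insert fin finite_subset[OF f2span_insert_subset] by auto
qed

lemma f2span_Un_subset:
  assumes "{} \<in> U" "\<And>u v. u \<in> U \<Longrightarrow> v \<in> U \<Longrightarrow> padd u v \<in> U"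
  shows "f2span (S \<union> U) \<subseteq> {padd s u | s u. s \<in> f2span S \<and> u \<in> U}"
proof
  fix p assume "p \<in> f2span (S \<union> U)"
  then show "p \<in> {padd s u | s u. s \<in> f2span S \<and> u \<in> U}"
  proof (induction p rule: f2span.induct)
    case zero
    then show ?case using assms(1) f2span.zero by force
  next
    case (add p t)
    then obtain s u where p: "p = padd s u" "s \<in> f2span S" "u \<in> U" by blast
    from add.hyps(2) show ?case
    proof
      assume "t \<in> S"
      then have "padd p t = padd (padd s t) u" "padd s t \<in> f2span S"
        using p by (simp_all add: padd_ac f2span.add)
      then show ?thesis using p(3) by blast
    next
      assume "t \<in> U"
      then have "padd p t = padd s (padd u t)" "padd u t \<in> U"
        using p assms(2) by (simp_all add: padd_assoc)
      then show ?thesis using p(2) by blast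
    qed
  qed
qed

definition parity_on :: "poly \<Rightarrow> poly \<Rightarrow> bool" where
  "parity_on T p \<longleftrightarrow> odd (card (p \<inter> T))"

lemma card_symdiff:
  assumes "finite A" "finite B"
  shows "card ((A - B) \<union> (B - A)) + 2 * card (A \<inter> B) = card A + card B"
proof -
  have "card ((A - B) \<union> (B - A)) = card (A - B) + card (B - A)"
    using assms by (intro card_Un_disjoint) auto
  moreover have "card (A - B) + card (A \<inter> B) = card A" "card (B - A) + card (A \<inter> B) = card B"
    using assms by (simp_all add: card_Diff_subset_Int card_mono Int_commute)
  ultimately show ?thesis by linarith
qed

lemma parity_on_padd: "finite T \<Longrightarrow> parity_on T (padd p q) \<longleftrightarrow> parity_on T p \<noteq> parity_on T q"
proof -
  assume T: "finite T"
  have "padd p q \<inter> T = ((p \<inter> T) - (q \<inter> T)) \<union> ((q \<inter> T) - (p \<inter> T))"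
    by (auto simp: padd_def)
  moreover have "card (\<dots>) + 2 * card ((p \<inter> T) \<inter> (q \<inter> T)) = card (p \<inter> T) + card (q \<inter> T)"
    using T by (intro card_symdiff) auto
  ultimately show ?thesis unfolding parity_on_def by presburger
qed

lemma not_parity_on_f2span:
  assumes "finite T" "\<And>s. s \<in> S \<Longrightarrow> \<not> parity_on T s" "p \<in> f2span S"
  shows "\<not> parity_on T p"
  using assms(3) by induction (simp_all add: assms parity_on_padd, simp add: parity_on_def)

lemma qdim_le:
  "finite S \<Longrightarrow> S \<subseteq> W \<Longrightarrow> W \<subseteq> {padd s u | s u. s \<in> f2span S \<and> u \<in> U} \<Longrightarrow> qdim W U \<le> card S"
  unfolding qdim_def by (rule Least_le) blast

lemma qdim_attained:
  assumes "finite S0" "S0 \<subseteq> W" "W \<subseteq> {padd s u | s u. s \<in> f2span S0 \<and> u \<in> U}"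
  obtains S where "finite S" "card S = qdim W U" "W \<subseteq> {padd s u | s u. s \<in> f2span S \<and> u \<in> U}"
proof -
  let ?P = "\<lambda>n. \<exists>S. finite S \<and> card S = n \<and> S \<subseteq> W \<and> W \<subseteq> {padd s u | s u. s \<in> f2span S \<and> u \<in> U}"
  have "?P (card S0)" using assms by blast
  then have "?P (Least ?P)" by (rule LeastI)
  then obtain S where "finite S" "card S = Least ?P"
    "W \<subseteq> {padd s u | s u. s \<in> f2span S \<and> u \<in> U}" by blast
  moreover have "qdim W U = Least ?P" by (simp add: qdim_def)
  ultimately show ?thesis using that by simp
qed

text \<open>A family of functionals vanishing on \<open>U\<close> that separates the subsets of \<open>A\<close> shows that
  \<open>A \<subseteq> W\<close> is linearly independent modulo \<open>U\<close>.\<close>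

lemma card_le_qdim:
  assumes S0: "finite S0" "S0 \<subseteq> W" "W \<subseteq> {padd s u | s u. s \<in> f2span S0 \<and> u \<in> U}"
    and A: "finite A" "Pow A \<subseteq> W"
    and T: "\<And>x. x \<in> A \<Longrightarrow> finite (T x)" "\<And>x u. x \<in> A \<Longrightarrow> u \<in> U \<Longrightarrow> \<not> parity_on (T x) u"
    and separating: "\<And>K. K \<subseteq> A \<Longrightarrow> K \<noteq> {} \<Longrightarrow> \<exists>x\<in>A. parity_on (T x) K"
  shows "card A \<le> qdim W U"
proof -
  obtain S where S: "finite S" "card S = qdim W U" "W \<subseteq> {padd s u | s u. s \<in> f2span S \<and> u \<in> U}"
    using qdim_attained[OF S0] .
  define profile where "profile p = {x \<in> A. parity_on (T x) p}" for p
  have profile_padd: "profile (padd p q) = padd (profile p) (profile q)" for p q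
    unfolding profile_def by (rule set_eqI) (auto simp: padd_iff parity_on_padd T(1))
  have "inj_on profile (Pow A)"
  proof (rule inj_onI)
    fix K K' assume K: "K \<in> Pow A" "K' \<in> Pow A" and eq: "profile K = profile K'"
    have "profile (padd K K') = {}" by (simp add: profile_padd eq)
    moreover have "padd K K' \<subseteq> A" using K by (auto simp: padd_def)
    ultimately have "padd K K' = {}" using separating unfolding profile_def by blast
    then show "K = K'" by (auto simp: padd_def)
  qed
  then have "2 ^ card A = card (profile ` Pow A)"
    using A(1) by (simp add: card_image card_Pow)
  also have "\<dots> \<le> card (profile ` f2span S)"
  proof (rule card_mono)
    show "finite (profile ` f2span S)" using finite_f2span[OF S(1)] by simp
    show "profile ` Pow A \<subseteq> profile ` f2span S"
    proof
      fix X assume "X \<in> profile ` Pow A"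
      then obtain K where K: "K \<subseteq> A" "X = profile K" by blast
      then obtain s u where su: "K = padd s u" "s \<in> f2span S" "u \<in> U"
        using A(2) S(3) by blast
      have "profile u = {}" using T(2) su(3) unfolding profile_def by blast
      then show "X \<in> profile ` f2span S" using K su by (simp add: profile_padd)
    qed
  qed
  also have "\<dots> \<le> card (f2span S)" using finite_f2span[OF S(1)] by (simp add: card_image_le)
  also have "\<dots> \<le> 2 ^ card S" using finite_f2span[OF S(1)] by simp
  finally show ?thesis using S(2) by simp
qed

section \<open>Weight vectors and the order on monomials\<close>

lemma weight_Nil [simp]: "weight [] i = 0"
  by (simp add: weight_def)

lemma weight_Cons [simp]: "weight (e # x) i = e div 2 ^ i mod 2 + weight x i"
  unfolding weight_def length_Cons sum.lessThan_Suc_shift by simp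

lemma weight_eq_0: "(\<And>e. e \<in> set x \<Longrightarrow> e < 2 ^ N) \<Longrightarrow> N \<le> i \<Longrightarrow> weight x i = 0"
proof (induction x)
  case (Cons e x)
  have "e < 2 ^ N" by (simp add: Cons.prems)
  also have "(2::nat) ^ N \<le> 2 ^ i" using Cons.prems(2) by simp
  finally have "e < 2 ^ i" .
  then show ?case using Cons by simp
qed simp

lemma sum_binary_digits: "(\<Sum>i<N. 2 ^ i * (a div 2 ^ i mod 2)) = (a::nat) mod 2 ^ N"
proof (induction N)
  case (Suc N)
  have "a mod 2 ^ Suc N = 2 ^ N * (a div 2 ^ N mod 2) + a mod 2 ^ N"
    by (simp only: power_Suc2 mod_mult2_eq)
  then show ?case using Suc.IH by simp
qed simp

lemma sum_list_eq_weights: "(\<And>e. e \<in> set x \<Longrightarrow> e < 2 ^ N) \<Longrightarrow> sum_list x = (\<Sum>i<N. 2 ^ i * weight x i)"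
proof (induction x)
  case (Cons e x)
  have "(\<Sum>i<N. 2 ^ i * weight (e # x) i) = (\<Sum>i<N. 2 ^ i * (e div 2 ^ i mod 2)) + (\<Sum>i<N. 2 ^ i * weight x i)"
    by (simp add: distrib_left sum.distrib)
  moreover have "e mod 2 ^ N = e" using Cons.prems by simp
  ultimately show ?case using Cons by (simp add: sum_binary_digits)
qed simp

lemma entries_less_exp_sum_list: "e \<in> set x \<Longrightarrow> e < 2 ^ sum_list x"
  using member_le_sum_list[of e x] less_exp[of "sum_list x"] by linarith

lemma wdeg_weight: "wdeg (weight x) = sum_list x"
proof -
  let ?N = "sum_list x"
  have small: "\<And>e. e \<in> set x \<Longrightarrow> e < 2 ^ ?N" by (rule entries_less_exp_sum_list)
  have "weight x i = 0" if "?N \<le> i" for i by (rule weight_eq_0[OF small that])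
  then have "{i. weight x i \<noteq> 0} \<subseteq> {..<?N}" using not_less by blast
  then have "(\<Sum>i<?N. 2 ^ i * weight x i) = (\<Sum>i\<in>{i. weight x i \<noteq> 0}. 2 ^ i * weight x i)"
    by (rule sum.mono_neutral_right[OF finite_lessThan]) simp
  moreover have "sum_list x = (\<Sum>i<?N. 2 ^ i * weight x i)" by (rule sum_list_eq_weights[OF small])
  ultimately show ?thesis unfolding wdeg_def by linarith
qed

lemma entries_less_if_weight_eq_0:
  assumes "\<And>i. N \<le> i \<Longrightarrow> weight x i = 0" and "e \<in> set x"
  shows "e < 2 ^ N"
proof -
  have "\<not> bit e i" if "N \<le> i" for i
  proof -
    have "weight x i = 0" using assms(1) that .
    then have "e div 2 ^ i mod 2 = 0" using assms(2)
      by (induction x) (auto simp del: weight_Cons simp: weight_Cons[of _ _ i])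
    then show ?thesis by (simp add: bit_nat_def even_iff_mod_2_eq_zero)
  qed
  then have "e = take_bit N e"
    by (intro bit_eqI) (metis bit_take_bit_iff not_less)
  then show ?thesis by (metis take_bit_nat_less_exp)
qed

text \<open>Comparing a monomial by its weight vector first and its exponents second is the
  lexicographic order on \<open>key N x\<close>, once all exponents are below \<open>2 ^ N\<close>.\<close>

definition key :: "nat \<Rightarrow> mono \<Rightarrow> nat list" where
  "key N x = map (weight x) [0..<N] @ x"

lemma lexlt_Cons: "lexlt (a # x) (b # y) \<longleftrightarrow> a < b \<or> a = b \<and> lexlt x y"
  unfolding lexlt_def by (auto simp: Ex_less_Suc2 All_less_Suc2)

lemma lexlt_iff_less: "length x = length y \<Longrightarrow> lexlt x y \<longleftrightarrow> x < y"
proof (induction x arbitrary: y)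
  case Nil
  then show ?case by (simp add: lexlt_def)
next
  case (Cons a x)
  then obtain b y' where "y = b # y'" "length x = length y'" by (cases y) auto
  then show ?case using Cons.IH by (simp add: lexlt_Cons)
qed

lemma less_append_iff:
  "length a = length b \<Longrightarrow> a @ x < b @ y \<longleftrightarrow> a < b \<or> a = b \<and> x < (y :: 'a :: linorder list)"
proof (induction a arbitrary: b)
  case (Cons c a)
  then show ?case by (cases b) auto
qed simp

lemma wlt_iff_less:
  assumes "\<And>i. N \<le> i \<Longrightarrow> v i = 0" "\<And>i. N \<le> i \<Longrightarrow> w i = 0"
  shows "wlt v w \<longleftrightarrow> map v [0..<N] < map w [0..<N]"
proof -
  have "wlt v w \<longleftrightarrow> (\<exists>k<N. v k < w k \<and> (\<forall>i<k. v i = w i))"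
    unfolding wlt_def using assms by (metis not_le not_less0)
  also have "\<dots> \<longleftrightarrow> lexlt (map v [0..<N]) (map w [0..<N])"
    by (auto simp: lexlt_def)
  finally show ?thesis by (simp add: lexlt_iff_less)
qed

lemma eq_iff_map_upt_eq:
  assumes "\<And>i. N \<le> i \<Longrightarrow> v i = 0" "\<And>i. N \<le> i \<Longrightarrow> w i = 0"
  shows "v = w \<longleftrightarrow> map v [0..<N] = map w [0..<N]"
  using assms by (auto simp: map_eq_conv intro!: ext)

lemma mless_iff_key_less:
  assumes "length x = length y" "sum_list x < 2 ^ N" "sum_list y < 2 ^ N"
  shows "mless x y \<longleftrightarrow> key N x < key N y"
proof -
  have "\<And>i. N \<le> i \<Longrightarrow> weight x i = 0" "\<And>i. N \<le> i \<Longrightarrow> weight y i = 0"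
    using assms(2,3) member_le_sum_list by (auto intro!: weight_eq_0 dest: order.strict_trans1)
  note vanish = wlt_iff_less[of N "weight x" "weight y", OF this]
    eq_iff_map_upt_eq[of N "weight x" "weight y", OF this]
  have lengths: "length (map (weight x) [0..<N]) = length (map (weight y) [0..<N])" by simp
  show ?thesis
    unfolding mless_def key_def less_append_iff[OF lengths] lexlt_iff_less[OF assms(1)]
    using vanish by blast
qed

lemma finite_monomials: "finite {x :: mono. length x = n \<and> sum_list x = d}"
proof (rule finite_subset)
  show "{x :: mono. length x = n \<and> sum_list x = d} \<subseteq> {x. set x \<subseteq> {..d} \<and> length x = n}"
    using member_le_sum_list by fastforce
qed (simp add: finite_lists_length_eq)

lemma wf_mless:
  "wf {(y, x). length y = n \<and> sum_list y = d \<and> length x = n \<and> sum_list x = d \<and> mless y x}"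
  (is "wf ?r")
proof (rule finite_acyclic_wf)
  let ?M = "{x :: mono. length x = n \<and> sum_list x = d}"
  have key: "(y, x) \<in> ?r \<longleftrightarrow> y \<in> ?M \<and> x \<in> ?M \<and> key d y < key d x" for x y
    using mless_iff_key_less[of y x d] less_exp[of d] by auto
  show "finite ?r" by (rule finite_subset[of _ "?M \<times> ?M"]) (auto simp: finite_monomials)
  have "trans ?r" unfolding trans_def key by auto
  moreover have "irrefl ?r" unfolding irrefl_def key by simp
  ultimately show "acyclic ?r" by (simp add: acyclic_irrefl trancl_id)
qed

definition sq_coeff :: "nat \<Rightarrow> nat \<Rightarrow> bool" where
  "sq_coeff e f \<longleftrightarrow> e \<le> f \<and> odd (e choose (f - e))"

lemma sq_iff: "b \<in> sq k a \<longleftrightarrow> list_all2 sq_coeff a b \<and> sum_list b = sum_list a + k"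
  unfolding sq_def sq_coeff_def list_all2_conv_all_nth by auto

lemma sq_length_sum_list: "b \<in> sq k a \<Longrightarrow> length b = length a \<and> sum_list b = sum_list a + k"
  by (simp add: sq_def)

lemma sum_list_le_if_sq_coeff: "list_all2 sq_coeff a b \<Longrightarrow> sum_list a \<le> sum_list b"
  by (induction a b rule: list_all2_induct) (auto simp: sq_coeff_def)

fun sq_list :: "nat \<Rightarrow> mono \<Rightarrow> mono list" where
  "sq_list k [] = (if k = 0 then [[]] else [])"
| "sq_list k (e # a) = concat (map (\<lambda>j. map (Cons (e + j)) (sq_list (k - j) a))
      (filter (\<lambda>j. odd (e choose j)) [0..<Suc k]))"

lemma mem_sq_list_Nil: "b \<in> set (sq_list k []) \<longleftrightarrow> b = [] \<and> k = 0"
  by simp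

lemma mem_sq_list_Cons: "b \<in> set (sq_list k (e # a)) \<longleftrightarrow>
  (\<exists>j\<le>k. odd (e choose j) \<and> (\<exists>c. b = (e + j) # c \<and> c \<in> set (sq_list (k - j) a)))"
  by (auto simp: less_Suc_eq_le simp del: upt_Suc sq_list.simps(1))

lemma mem_sq_list: "b \<in> set (sq_list k a) \<longleftrightarrow> list_all2 sq_coeff a b \<and> sum_list b = sum_list a + k"
proof (induction a arbitrary: k b)
  case Nil
  show ?case unfolding mem_sq_list_Nil by (cases b) simp_all
next
  case (Cons e a)
  show ?case
  proof
    assume "b \<in> set (sq_list k (e # a))"
    then obtain j c where "j \<le> k" "odd (e choose j)" "b = (e + j) # c"
        "list_all2 sq_coeff a c" "sum_list c = sum_list a + (k - j)"
      unfolding mem_sq_list_Cons Cons.IH by blast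
    then show "list_all2 sq_coeff (e # a) b \<and> sum_list b = sum_list (e # a) + k"
      by (simp add: sq_coeff_def)
  next
    assume "list_all2 sq_coeff (e # a) b \<and> sum_list b = sum_list (e # a) + k"
    then obtain f c where b: "b = f # c" "sq_coeff e f" "list_all2 sq_coeff a c"
        "f + sum_list c = e + sum_list a + k"
      by (auto simp: list_all2_Cons1)
    moreover have "sum_list a \<le> sum_list c" using b(3) by (rule sum_list_le_if_sq_coeff)
    ultimately show "b \<in> set (sq_list k (e # a))"
      unfolding mem_sq_list_Cons Cons.IH
      by (intro exI[of _ "f - e"]) (auto simp: sq_coeff_def)
  qed
qed

lemma set_sq_list: "set (sq_list k a) = sq k a"
  by (auto simp: mem_sq_list sq_iff)

lemma finite_sq: "finite (sq k a)"
  unfolding set_sq_list[symmetric] by (rule List.finite_set)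

fun sq_sources :: "mono \<Rightarrow> mono list" where
  "sq_sources [] = [[]]"
| "sq_sources (f # b) = concat (map (\<lambda>e. map (Cons e) (sq_sources b))
      (filter (\<lambda>e. odd (e choose (f - e))) [0..<Suc f]))"

lemma sq_sources_complete: "b \<in> sq k a \<Longrightarrow> a \<in> set (sq_sources b)"
proof -
  have "list_all2 sq_coeff a b \<Longrightarrow> a \<in> set (sq_sources b)" for a
  proof (induction b arbitrary: a)
    case (Cons f b)
    then obtain e c where a: "a = e # c" "sq_coeff e f" "list_all2 sq_coeff c b"
      by (auto simp: list_all2_Cons2)
    moreover have "c \<in> set (sq_sources b)" using Cons.IH a(3) .
    ultimately have "e < Suc f \<and> odd (e choose (f - e)) \<and> a \<in> set (map (Cons e) (sq_sources b))"
      by (auto simp: sq_coeff_def)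
    then show ?case by (simp del: upt_Suc) blast
  qed simp
  then show "b \<in> sq k a \<Longrightarrow> a \<in> set (sq_sources b)" by (simp add: sq_iff)
qed

fun monomials :: "nat \<Rightarrow> nat \<Rightarrow> nat \<Rightarrow> mono list" where
  "monomials 0 d m = (if d = 0 then [[]] else [])"
| "monomials (Suc n) d m = concat (map (\<lambda>e. map (Cons e) (monomials n (d - e) m)) [0..<Suc (min d m)])"

lemma monomials_complete:
  "length y = n \<Longrightarrow> sum_list y = d \<Longrightarrow> (\<And>e. e \<in> set y \<Longrightarrow> e \<le> m) \<Longrightarrow> y \<in> set (monomials n d m)"
proof (induction n arbitrary: y d)
  case (Suc n)
  from Suc.prems(1) obtain e z where y: "y = e # z" by (cases y) auto
  have "z \<in> set (monomials n (d - e) m)" using Suc y by (intro Suc.IH) auto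
  moreover have "e < Suc (min d m)" using Suc.prems(2,3) y by (simp add: less_Suc_eq_le)
  ultimately show ?case using y by (auto simp del: upt_Suc)
qed simp

section \<open>Certificates of admissibility and inadmissibility\<close>

definition dual_witness :: "mono \<Rightarrow> poly \<Rightarrow> bool" where
  "dual_witness x T \<longleftrightarrow> finite T \<and> x \<in> T \<and> (\<forall>s\<in>hitgens. \<not> parity_on T s) \<and> (\<forall>t\<in>T. \<not> mless t x)"

lemma admissible_if_dual_witness:
  assumes "length x = 5" "dual_witness x T"
  shows "admissible x"
  unfolding admissible_def inadmissible_def
proof (intro conjI notI)
  assume "\<exists>Y. finite Y \<and> (\<forall>y\<in>Y. length y = 5 \<and> sum_list y = sum_list x \<and> mless y x) \<and> padd {x} Y \<in> hit"
  then obtain Y where Y: "\<forall>y\<in>Y. mless y x" "padd {x} Y \<in> hit" by blast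
  have T: "finite T" "x \<in> T" "\<And>s. s \<in> hitgens \<Longrightarrow> \<not> parity_on T s" "\<And>t. t \<in> T \<Longrightarrow> \<not> mless t x"
    using assms(2) by (auto simp: dual_witness_def)
  have "\<not> parity_on T (padd {x} Y)"
    using not_parity_on_f2span[OF T(1,3)] Y(2) unfolding hit_def by blast
  moreover have "padd {x} Y \<inter> T = {x}" using Y(1) T(2,4) by (auto simp: padd_def)
  ultimately show False by (simp add: parity_on_def)
qed (fact assms(1))

definition leading_term :: "mono \<Rightarrow> nat \<Rightarrow> mono \<Rightarrow> bool" where
  "leading_term x i a \<longleftrightarrow> 0 < i \<and> length a = 5 \<and> x \<in> sq i a \<and> (\<forall>y\<in>sq i a. y \<noteq> x \<longrightarrow> mless y x)"

lemma inadmissible_if_leading_term: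
  assumes "leading_term x i a"
  shows "inadmissible x"
proof -
  have sq: "0 < i" "length a = 5" "x \<in> sq i a" "\<And>y. y \<in> sq i a \<Longrightarrow> y \<noteq> x \<Longrightarrow> mless y x"
    using assms by (auto simp: leading_term_def)
  have "sq i a \<in> hit" unfolding hit_def hitgens_def using sq(1,2) by (intro f2span_base) blast
  moreover have "padd {x} (sq i a - {x}) = sq i a" using sq(3) by (auto simp: padd_def)
  moreover have "length y = 5 \<and> sum_list y = sum_list x" if "y \<in> sq i a" for y
    using sq_length_sum_list[OF that] sq_length_sum_list[OF sq(3)] sq(2) by simp
  ultimately show ?thesis unfolding inadmissible_def using sq(4) finite_sq
    by (intro exI[of _ "sq i a - {x}"]) auto
qed

text \<open>The degree of \<open>b \<in> T\<close> determines the square \<open>Sq\<^sup>i a\<close> that can contain it, so the count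
  below is the number of terms \<open>Sq\<^sup>i a\<close> has in \<open>T\<close>.\<close>

lemma hit_orthogonal_if_even_sources:
  assumes "distinct T" "\<And>b. b \<in> set T \<Longrightarrow> sum_list b = d"
    and "\<And>a. a \<in> set (concat (map sq_sources T)) \<Longrightarrow> sum_list a < d \<Longrightarrow>
      even (length (filter (list_all2 sq_coeff a) T))"
    and "s \<in> hitgens"
  shows "\<not> parity_on (set T) s"
proof -
  obtain i a where s: "s = sq i a" "0 < i" using assms(4) by (auto simp: hitgens_def)
  show ?thesis
  proof (cases "sq i a \<inter> set T = {}")
    case False
    then obtain b where b: "b \<in> sq i a" "b \<in> set T" by auto
    have "sum_list b = sum_list a + i" using b(1) by (simp add: sq_iff)
    then have i: "i = d - sum_list a" "sum_list a < d" using assms(2)[OF b(2)] s(2) by auto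
    have "a \<in> set (concat (map sq_sources T))" using sq_sources_complete[OF b(1)] b(2) by auto
    then have "even (length (filter (list_all2 sq_coeff a) T))" using assms(3) i(2) by blast
    moreover have "sq i a \<inter> set T = set (filter (list_all2 sq_coeff a) T)"
      using assms(2) i by (auto simp: sq_iff)
    moreover have "card (set (filter (list_all2 sq_coeff a) T)) = length (filter (list_all2 sq_coeff a) T)"
      using assms(1) by (intro distinct_card) simp
    ultimately show ?thesis using s(1) by (simp add: parity_on_def)
  qed (simp add: s parity_on_def)
qed

section \<open>The dimension of \<open>QP\<^sub>5(\<omega>)\<close>\<close>

definition QP5_zero :: "(nat \<Rightarrow> nat) \<Rightarrow> poly set" where
  "QP5_zero w = P5w w \<inter> f2span (hitgens \<union> P5minus_gens w)"

lemma P5w_iff: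
  "p \<in> P5w w \<longleftrightarrow> finite p \<and> (\<forall>y\<in>p. length y = 5 \<and> sum_list y = wdeg w \<and> wle (weight y) w)"
  by (simp add: P5w_def)

lemma in_P5w_if_weight_eq: "finite p \<Longrightarrow> (\<And>y. y \<in> p \<Longrightarrow> length y = 5 \<and> weight y = w) \<Longrightarrow> p \<in> P5w w"
  by (auto simp: P5w_iff wle_def simp flip: wdeg_weight)

lemma QP5_zero_subspace: "{} \<in> QP5_zero w" "u \<in> QP5_zero w \<Longrightarrow> v \<in> QP5_zero w \<Longrightarrow> padd u v \<in> QP5_zero w"
  by (auto simp: QP5_zero_def P5w_iff padd_def intro: f2span.zero f2span_padd[unfolded padd_def])

lemma singleton_in_QP5_zero_if_wlt:
  "length y = 5 \<Longrightarrow> sum_list y = wdeg w \<Longrightarrow> wlt (weight y) w \<Longrightarrow> {y} \<in> QP5_zero w"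
  unfolding QP5_zero_def P5minus_gens_def by (auto simp: P5w_iff wle_def intro: f2span_base)

abbreviation admissible_of_weight :: "(nat \<Rightarrow> nat) \<Rightarrow> mono set" where
  "admissible_of_weight w \<equiv> {x. admissible x \<and> weight x = w}"

lemma inadmissibleE:
  assumes "inadmissible y" "length y = 5" "weight y = w"
  obtains Y where "finite Y" "\<And>z. z \<in> Y \<Longrightarrow> length z = 5 \<and> sum_list z = wdeg w \<and> mless z y"
    "padd {y} Y \<in> QP5_zero w"
proof -
  have sum: "sum_list y = wdeg w" using wdeg_weight[of y] assms(3) by simp
  obtain Y where Y: "finite Y" "\<And>z. z \<in> Y \<Longrightarrow> length z = 5 \<and> sum_list z = wdeg w \<and> mless z y"
      "padd {y} Y \<in> hit"
    using assms(1) sum unfolding inadmissible_def by auto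
  have "wle (weight z) w" if "z \<in> insert y Y" for z
    using that Y(2) assms(3) by (auto simp: mless_def wle_def)
  moreover have "padd {y} Y \<subseteq> insert y Y" by (auto simp: padd_def)
  ultimately have "padd {y} Y \<in> P5w w"
    unfolding P5w_iff using Y(1,2) assms(2) sum by (auto intro: finite_subset)
  moreover have "padd {y} Y \<in> f2span (hitgens \<union> P5minus_gens w)"
    using Y(3) unfolding hit_def by (rule f2span_mono) blast
  ultimately show ?thesis using that Y(1,2) by (simp add: QP5_zero_def)
qed

lemma singleton_in_span_admissible:
  assumes "length y = 5" "weight y = w"
  shows "{y} \<in> f2span ((\<lambda>x. {x}) ` admissible_of_weight w \<union> QP5_zero w)"
proof -
  let ?V = "f2span ((\<lambda>x. {x}) ` admissible_of_weight w \<union> QP5_zero w)"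
  have "length y = 5 \<and> sum_list y = wdeg w \<and> weight y = w \<longrightarrow> {y} \<in> ?V"
    using wf_mless[of 5 "wdeg w"]
  proof (induction y rule: wf_induct_rule)
    case (less y)
    show ?case
    proof
      assume y: "length y = 5 \<and> sum_list y = wdeg w \<and> weight y = w"
      show "{y} \<in> ?V"
      proof (cases "admissible y")
        case True
        then show ?thesis using y by (intro f2span_base) auto
      next
        case False
        then obtain Y where Y: "finite Y" "\<And>z. z \<in> Y \<Longrightarrow> length z = 5 \<and> sum_list z = wdeg w \<and> mless z y"
            "padd {y} Y \<in> QP5_zero w"
          using y inadmissibleE[of y w] by (auto simp: admissible_def)
        have "{z} \<in> ?V" if z: "z \<in> Y" for z
        proof (cases "weight z = w")
          case True
          then show ?thesis using less.IH Y(2)[OF z] y by blast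
        next
          case False
          then have "wlt (weight z) w" using Y(2)[OF z] y by (simp add: mless_def)
          then show ?thesis
            using Y(2)[OF z] by (intro f2span_base) (simp add: singleton_in_QP5_zero_if_wlt)
        qed
        then have "Y \<in> ?V" using Y(1) by (rule f2span_finite_sum[rotated])
        moreover have "padd {y} Y \<in> ?V" using Y(3) by (intro f2span_base) simp
        ultimately have "padd (padd {y} Y) Y \<in> ?V" by (rule f2span_padd[rotated])
        then show ?thesis by (simp add: padd_cancel_right)
      qed
    qed
  qed
  moreover have "sum_list y = wdeg w" using wdeg_weight[of y] assms(2) by simp
  ultimately show ?thesis using assms by blast
qed

lemma P5w_subset_span_admissible:
  "P5w w \<subseteq> {padd s u | s u. s \<in> f2span ((\<lambda>x. {x}) ` admissible_of_weight w) \<and> u \<in> QP5_zero w}"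
proof -
  have "P5w w \<subseteq> f2span ((\<lambda>x. {x}) ` admissible_of_weight w \<union> QP5_zero w)"
  proof
    fix p assume "p \<in> P5w w"
    then have p: "finite p" "\<And>y. y \<in> p \<Longrightarrow> length y = 5 \<and> sum_list y = wdeg w \<and> wle (weight y) w"
      by (auto simp: P5w_iff)
    show "p \<in> f2span ((\<lambda>x. {x}) ` admissible_of_weight w \<union> QP5_zero w)"
    proof (rule f2span_finite_sum[OF p(1)])
      fix y assume "y \<in> p"
      then have y: "length y = 5" "sum_list y = wdeg w" "weight y = w \<or> wlt (weight y) w"
        using p(2) by (auto simp: wle_def)
      from y(3) show "{y} \<in> f2span ((\<lambda>x. {x}) ` admissible_of_weight w \<union> QP5_zero w)"
      proof
        assume "wlt (weight y) w"
        then show ?thesis using y by (intro f2span_base) (simp add: singleton_in_QP5_zero_if_wlt)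
      qed (use y singleton_in_span_admissible in blast)
    qed
  qed
  then show ?thesis using f2span_Un_subset[OF QP5_zero_subspace] by blast
qed

lemma finite_admissible_of_weight: "finite (admissible_of_weight w)"
  by (rule finite_subset[OF _ finite_monomials[of 5 "wdeg w"]]) (auto simp: admissible_def wdeg_weight)

lemma QP5dim_le_card_admissible: "QP5dim w \<le> card (admissible_of_weight w)"
proof -
  have "QP5dim w \<le> card ((\<lambda>x. {x}) ` admissible_of_weight w)"
    unfolding QP5dim_def QP5_zero_def[symmetric]
  proof (rule qdim_le)
    show "(\<lambda>x. {x}) ` admissible_of_weight w \<subseteq> P5w w"
      by (auto simp: admissible_def intro: in_P5w_if_weight_eq)
  qed (simp_all add: finite_admissible_of_weight P5w_subset_span_admissible)
  then show ?thesis by (simp add: card_image)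
qed

lemma dual_witness_vanishes_on_QP5_zero:
  assumes "dual_witness x T" "weight x = w" "u \<in> QP5_zero w"
  shows "\<not> parity_on T u"
proof (rule not_parity_on_f2span)
  show "finite T" "u \<in> f2span (hitgens \<union> P5minus_gens w)"
    using assms(1,3) by (auto simp: dual_witness_def QP5_zero_def)
  fix s assume "s \<in> hitgens \<union> P5minus_gens w"
  then consider "s \<in> hitgens" | z where "s = {z}" "wlt (weight z) w"
    unfolding P5minus_gens_def by blast
  then show "\<not> parity_on T s"
  proof cases
    case 2
    then have "mless z x" using assms(2) by (simp add: mless_def)
    then have "z \<notin> T" using assms(1) by (auto simp: dual_witness_def)
    then show ?thesis using 2 by (simp add: parity_on_def)
  qed (use assms(1) in \<open>simp add: dual_witness_def\<close>)
qed

lemma parity_on_dual_witness_Max: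
  assumes "finite K" "K \<noteq> {}" "\<And>x. x \<in> K \<Longrightarrow> length x = 5 \<and> weight x = w"
    and "dual_witness (Max K) T"
  shows "parity_on T K"
proof -
  have "K \<inter> T = {Max K}"
  proof (intro equalityI subsetI)
    fix y assume y: "y \<in> K \<inter> T"
    show "y \<in> {Max K}"
    proof (rule ccontr)
      assume "y \<notin> {Max K}"
      then have "y < Max K" using y assms(1) by (simp add: order.not_eq_order_implies_strict)
      moreover have "length y = length (Max K)" "weight y = weight (Max K)"
        using assms(1-3) y by (simp_all add: Max_in)
      ultimately have "mless y (Max K)" by (simp add: mless_def lexlt_iff_less)
      then show False using assms(4) y by (auto simp: dual_witness_def)
    qed
  qed (use assms Max_in in \<open>simp add: dual_witness_def\<close>)
  then show ?thesis by (simp add: parity_on_def)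
qed

lemma card_le_QP5dim:
  assumes A: "finite A" "\<And>x. x \<in> A \<Longrightarrow> length x = 5 \<and> weight x = w"
    and T: "\<And>x. x \<in> A \<Longrightarrow> dual_witness x (T x)"
  shows "card A \<le> QP5dim w"
  unfolding QP5dim_def QP5_zero_def[symmetric]
proof (rule card_le_qdim[OF _ _ P5w_subset_span_admissible A(1)])
  show "finite ((\<lambda>x. {x}) ` admissible_of_weight w)" by (simp add: finite_admissible_of_weight)
  show "(\<lambda>x. {x}) ` admissible_of_weight w \<subseteq> P5w w"
    by (auto simp: admissible_def intro: in_P5w_if_weight_eq)
  show "Pow A \<subseteq> P5w w" using A by (auto intro: in_P5w_if_weight_eq finite_subset)
  show "finite (T x)" if "x \<in> A" for x using T[OF that] by (simp add: dual_witness_def)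
  show "\<not> parity_on (T x) u" if "x \<in> A" "u \<in> QP5_zero w" for x u
    using dual_witness_vanishes_on_QP5_zero T A(2) that by blast
  show "\<exists>x\<in>A. parity_on (T x) K" if K: "K \<subseteq> A" "K \<noteq> {}" for K
  proof
    have "finite K" using K(1) A(1) by (rule finite_subset)
    then show "Max K \<in> A" using K Max_in by blast
    then show "parity_on (T (Max K)) K"
      using \<open>finite K\<close> K A(2) T by (intro parity_on_dual_witness_Max[where w = w]) auto
  qed
qed

theorem QP5dim_eq_card:
  assumes "admissible_of_weight w = A" "\<And>x. x \<in> A \<Longrightarrow> dual_witness x (T x)"
  shows "QP5dim w = card A"
proof (rule antisym)
  show "QP5dim w \<le> card A" using QP5dim_le_card_admissible[of w] assms(1) by simp
  show "card A \<le> QP5dim w"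
    using assms finite_admissible_of_weight by (intro card_le_QP5dim) (auto simp: admissible_def)
qed

definition check_dual :: "nat \<Rightarrow> nat \<Rightarrow> mono \<times> mono list \<Rightarrow> bool" where
  "check_dual N d = (\<lambda>(x, T). x \<in> set T \<and> distinct T \<and>
     list_all (\<lambda>t. length t = 5 \<and> sum_list t = d \<and> \<not> key N t < key N x) T \<and>
     list_all (\<lambda>a. sum_list a < d \<longrightarrow> even (length (filter (list_all2 sq_coeff a) T)))
       (concat (map sq_sources T)))"

lemma dual_witness_if_check_dual:
  assumes "check_dual N d (x, T)" "d < 2 ^ N"
  shows "dual_witness x (set T) \<and> length x = 5 \<and> sum_list x = d"
proof -
  have T: "x \<in> set T" "distinct T" "\<And>t. t \<in> set T \<Longrightarrow> length t = 5 \<and> sum_list t = d \<and> \<not> key N t < key N x"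
    "\<And>a. a \<in> set (concat (map sq_sources T)) \<Longrightarrow> sum_list a < d \<Longrightarrow>
      even (length (filter (list_all2 sq_coeff a) T))"
    using assms(1) by (auto simp: check_dual_def list_all_iff)
  have "\<not> mless t x" if "t \<in> set T" for t
    using T(1,3) that assms(2) by (simp add: mless_iff_key_less)
  moreover have "\<not> parity_on (set T) s" if "s \<in> hitgens" for s
    using T(2,4) that T(3) by (intro hit_orthogonal_if_even_sources[of T d]) auto
  ultimately show ?thesis using T(1,3) by (simp add: dual_witness_def)
qed

definition check_leading :: "nat \<Rightarrow> mono \<times> nat \<times> mono \<Rightarrow> bool" where
  "check_leading N = (\<lambda>(x, i, a). 0 < i \<and> length a = 5 \<and> x \<in> set (sq_list i a) \<and>
     list_all (\<lambda>y. y = x \<or> key N y < key N x) (sq_list i a))"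

lemma leading_term_if_check_leading:
  assumes "check_leading N (x, i, a)" "sum_list x < 2 ^ N"
  shows "leading_term x i a"
proof -
  have c: "0 < i" "length a = 5" "x \<in> sq i a" "\<And>y. y \<in> sq i a \<Longrightarrow> y = x \<or> key N y < key N x"
    using assms(1) by (auto simp: check_leading_def list_all_iff set_sq_list)
  have "mless y x" if "y \<in> sq i a" "y \<noteq> x" for y
  proof -
    have "length y = length x" "sum_list y < 2 ^ N"
      using sq_length_sum_list[OF that(1)] sq_length_sum_list[OF c(3)] assms(2) by auto
    then show ?thesis using c(4)[OF that(1)] that(2) assms(2) by (simp add: mless_iff_key_less)
  qed
  then show ?thesis using c by (simp add: leading_term_def)
qed

text \<open>Weight vectors are compared on their first \<open>N\<close> entries; monomials of weight \<open>w\<close> have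
  exponents below \<open>2 ^ B\<close>, which bounds the enumeration.\<close>

theorem admissible_of_weight_certified:
  fixes DW :: "(mono \<times> mono list) list" and LT :: "(mono \<times> nat \<times> mono) list"
  assumes w: "\<And>i. B \<le> i \<Longrightarrow> w i = 0" "B \<le> N" "wdeg w = d" "d < 2 ^ N"
    and dual: "list_all (check_dual N d) DW"
    and weights: "list_all (\<lambda>x. map (weight x) [0..<N] = map w [0..<N]) (map fst DW)"
    and leading: "list_all (check_leading N) LT"
    and complete: "list_all (\<lambda>y. map (weight y) [0..<N] = map w [0..<N] \<longrightarrow>
        y \<in> set (map fst DW) \<or> y \<in> set (map fst LT)) (monomials 5 d (2 ^ B - 1))"
  shows "admissible_of_weight w = set (map fst DW) \<and> QP5dim w = card (set (map fst DW))"
proof -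
  have weight_eq: "weight y = w \<longleftrightarrow> map (weight y) [0..<N] = map w [0..<N]" if "sum_list y = d" for y
  proof (rule eq_iff_map_upt_eq)
    show "weight y i = 0" if "N \<le> i" for i
      using \<open>sum_list y = d\<close> w(4) that member_le_sum_list
      by (intro weight_eq_0[of y N]) (auto dest: order.strict_trans1)
  qed (use w(1,2) in simp)
  define T where "T x = set (the (map_of DW x))" for x
  have witness: "dual_witness x (T x) \<and> length x = 5 \<and> weight x = w" if x: "x \<in> set (map fst DW)" for x
  proof -
    obtain U where "map_of DW x = Some U"
      using x by (cases "map_of DW x") (auto simp: map_of_eq_None_iff)
    then have "(x, U) \<in> set DW" "T x = set U" by (auto simp: T_def dest: map_of_SomeD)
    then show ?thesis
      using dual weights dual_witness_if_check_dual[of N d x U] w(4) weight_eq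
      by (force simp: list_all_iff)
  qed
  have "y \<in> set (map fst DW)" if y: "admissible y" "weight y = w" for y
  proof -
    have d: "length y = 5" "sum_list y = d" using y w(3) by (auto simp: admissible_def wdeg_weight)
    have "e < 2 ^ B" if "e \<in> set y" for e
      using entries_less_if_weight_eq_0[of B y e] y(2) w(1) that by blast
    then have "y \<in> set (monomials 5 d (2 ^ B - 1))"
      using d by (intro monomials_complete) fastforce+
    then have "y \<in> set (map fst DW) \<or> y \<in> set (map fst LT)"
      using complete weight_eq[OF d(2)] y(2) by (auto simp: list_all_iff)
    moreover have "y \<notin> set (map fst LT)"
    proof
      assume "y \<in> set (map fst LT)"
      then obtain i a where "(y, i, a) \<in> set LT" by auto
      then have "leading_term y i a"
        using leading d(2) w(4) by (intro leading_term_if_check_leading[of N]) (auto simp: list_all_iff)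
      then show False using y(1) inadmissible_if_leading_term by (simp add: admissible_def)
    qed
    ultimately show ?thesis by blast
  qed
  moreover have "admissible x \<and> weight x = w" if "x \<in> set (map fst DW)" for x
    using witness[OF that] admissible_if_dual_witness by blast
  ultimately have adm: "admissible_of_weight w = set (map fst DW)" by blast
  then show ?thesis using QP5dim_eq_card[OF adm] witness by blast
qed

text \<open>Opaque step functions keep the simplifier from unfolding recursive calls under binders
  before their arguments are known.\<close>

definition sq_list_step :: "nat \<Rightarrow> nat \<Rightarrow> mono \<Rightarrow> nat \<Rightarrow> mono list" where
  "sq_list_step k e a j = map (Cons (e + j)) (sq_list (k - j) a)"

lemma sq_list_Cons_step:
  "sq_list k (e # a) = concat (map (sq_list_step k e a) (filter (\<lambda>j. odd (e choose j)) [0..<Suc k]))"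
  by (simp add: sq_list_step_def[abs_def] del: upt_Suc)

definition monomials_step :: "nat \<Rightarrow> nat \<Rightarrow> nat \<Rightarrow> nat \<Rightarrow> mono list" where
  "monomials_step n d m e = map (Cons e) (monomials n (d - e) m)"

lemma monomials_numeral:
  "monomials (numeral l) d m = concat (map (monomials_step (pred_numeral l) d m) [0..<Suc (min d m)])"
  by (simp add: monomials_step_def[abs_def] numeral_eq_Suc del: upt_Suc)

lemma upt_rec_plus_1: "[i..<j] = (if i < j then i # [i + 1..<j] else [])"
  by (simp add: upt_rec)

lemmas certificate_evaluation = check_dual_def check_leading_def key_def sq_coeff_def
  sq_list_Cons_step sq_list_step_def monomials_numeral monomials_step_def upt_rec_plus_1
  binomial_code fold_atLeastAtMost_nat.simps fact_numeral

lemma w3_apply: "w3 d i = (if i < d then 3 else 0)"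
  by (simp add: w3_def)

lemma wdeg_w3: "wdeg (w3 d) = 3 * (2 ^ d - 1)"
proof -
  have "{i. w3 d i \<noteq> 0} = {..<d}" by (auto simp: w3_def)
  then have "wdeg (w3 d) = (\<Sum>i<d. 3 * 2 ^ i)" by (simp add: wdeg_def w3_def mult.commute)
  also have "\<dots> = 3 * (2 ^ d - 1)"
    by (induction d) (simp_all add: algebra_simps)
  finally show ?thesis .
qed

text \<open>Each entry \<open>(x, T)\<close> pairs an admissible monomial \<open>x\<close> with a dual witness \<open>T\<close>; each entry
  \<open>(x, i, a)\<close> says that \<open>x\<close> is the leading term of \<open>Sq\<^sup>i a\<close>.\<close>

definition dual_witnesses_1 :: "(mono \<times> mono list) list" where
  "dual_witnesses_1 = [([0,0,1,1,1],[[0,0,1,1,1]]),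
 ([0,1,0,1,1],[[0,1,0,1,1]]),
 ([0,1,1,0,1],[[0,1,1,0,1]]),
 ([0,1,1,1,0],[[0,1,1,1,0]]),
 ([1,0,0,1,1],[[1,0,0,1,1]]),
 ([1,0,1,0,1],[[1,0,1,0,1]]),
 ([1,0,1,1,0],[[1,0,1,1,0]]),
 ([1,1,0,0,1],[[1,1,0,0,1]]),
 ([1,1,0,1,0],[[1,1,0,1,0]]),
 ([1,1,1,0,0],[[1,1,1,0,0]])]"

definition dual_witnesses_2 :: "(mono \<times> mono list) list" where
  "dual_witnesses_2 = [([0,0,3,3,3],[[0,0,3,3,3]]),
 ([0,1,2,3,3],[[0,1,2,3,3],[0,2,1,3,3]]),
 ([0,1,3,2,3],[[0,1,3,2,3],[0,2,3,1,3]]),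
 ([0,1,3,3,2],[[0,1,3,3,2],[0,2,3,3,1]]),
 ([0,3,0,3,3],[[0,3,0,3,3]]),
 ([0,3,1,2,3],[[0,3,1,2,3],[0,3,2,1,3]]),
 ([0,3,1,3,2],[[0,3,1,3,2],[0,3,2,3,1]]),
 ([0,3,3,0,3],[[0,3,3,0,3]]),
 ([0,3,3,1,2],[[0,3,3,1,2],[0,3,3,2,1]]),
 ([0,3,3,3,0],[[0,3,3,3,0]]),
 ([1,0,2,3,3],[[1,0,2,3,3],[2,0,1,3,3]]),
 ([1,0,3,2,3],[[1,0,3,2,3],[2,0,3,1,3]]),
 ([1,0,3,3,2],[[1,0,3,3,2],[2,0,3,3,1]]),
 ([1,1,2,2,3],[[1,1,2,2,3],[2,1,1,2,3],[2,1,2,1,3],[1,1,1,1,5]]),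
 ([1,1,2,3,2],[[1,1,2,3,2],[2,1,1,3,2],[2,1,2,3,1],[1,1,1,5,1]]),
 ([1,1,3,2,2],[[1,1,3,2,2],[2,1,3,1,2],[2,1,3,2,1],[1,1,5,1,1]]),
 ([1,2,0,3,3],[[1,2,0,3,3],[2,1,0,3,3]]),
 ([1,2,1,2,3],[[1,2,1,2,3],[2,1,1,2,3],[2,2,1,1,3],[1,1,1,1,5]]),
 ([1,2,1,3,2],[[1,2,1,3,2],[2,1,1,3,2],[2,2,1,3,1],[1,1,1,5,1]]),
 ([1,2,2,1,3],[[1,2,2,1,3],[2,1,2,1,3],[2,2,1,1,3],[1,1,1,1,5]]),
 ([1,2,2,3,1],[[1,2,2,3,1],[2,1,2,3,1],[2,2,1,3,1],[1,1,1,5,1]]),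
 ([1,2,3,0,3],[[1,2,3,0,3],[2,1,3,0,3]]),
 ([1,2,3,1,2],[[1,2,3,1,2],[2,1,3,1,2],[2,2,3,1,1],[1,1,5,1,1]]),
 ([1,2,3,2,1],[[1,2,3,2,1],[2,1,3,2,1],[2,2,3,1,1],[1,1,5,1,1]]),
 ([1,2,3,3,0],[[1,2,3,3,0],[2,1,3,3,0]]),
 ([1,3,0,2,3],[[1,3,0,2,3],[2,3,0,1,3]]),
 ([1,3,0,3,2],[[1,3,0,3,2],[2,3,0,3,1]]),
 ([1,3,1,2,2],[[1,3,1,2,2],[2,3,1,1,2],[2,3,1,2,1],[1,5,1,1,1]]),
 ([1,3,2,0,3],[[1,3,2,0,3],[2,3,1,0,3]]),
 ([1,3,2,1,2],[[1,3,2,1,2],[2,3,1,1,2],[2,3,2,1,1],[1,5,1,1,1]]),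
 ([1,3,2,2,1],[[1,3,2,2,1],[2,3,1,2,1],[2,3,2,1,1],[1,5,1,1,1]]),
 ([1,3,2,3,0],[[1,3,2,3,0],[2,3,1,3,0]]),
 ([1,3,3,0,2],[[1,3,3,0,2],[2,3,3,0,1]]),
 ([1,3,3,2,0],[[1,3,3,2,0],[2,3,3,1,0]]),
 ([3,0,0,3,3],[[3,0,0,3,3]]),
 ([3,0,1,2,3],[[3,0,1,2,3],[3,0,2,1,3]]),
 ([3,0,1,3,2],[[3,0,1,3,2],[3,0,2,3,1]]),
 ([3,0,3,0,3],[[3,0,3,0,3]]),
 ([3,0,3,1,2],[[3,0,3,1,2],[3,0,3,2,1]]),
 ([3,0,3,3,0],[[3,0,3,3,0]]),
 ([3,1,0,2,3],[[3,1,0,2,3],[3,2,0,1,3]]),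
 ([3,1,0,3,2],[[3,1,0,3,2],[3,2,0,3,1]]),
 ([3,1,1,2,2],[[3,1,1,2,2],[3,2,1,1,2],[3,2,1,2,1],[5,1,1,1,1]]),
 ([3,1,2,0,3],[[3,1,2,0,3],[3,2,1,0,3]]),
 ([3,1,2,1,2],[[3,1,2,1,2],[3,2,1,1,2],[3,2,2,1,1],[5,1,1,1,1]]),
 ([3,1,2,2,1],[[3,1,2,2,1],[3,2,1,2,1],[3,2,2,1,1],[5,1,1,1,1]]),
 ([3,1,2,3,0],[[3,1,2,3,0],[3,2,1,3,0]]),
 ([3,1,3,0,2],[[3,1,3,0,2],[3,2,3,0,1]]),
 ([3,1,3,2,0],[[3,1,3,2,0],[3,2,3,1,0]]),
 ([3,3,0,0,3],[[3,3,0,0,3]]),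
 ([3,3,0,1,2],[[3,3,0,1,2],[3,3,0,2,1]]),
 ([3,3,0,3,0],[[3,3,0,3,0]]),
 ([3,3,1,0,2],[[3,3,1,0,2],[3,3,2,0,1]]),
 ([3,3,1,2,0],[[3,3,1,2,0],[3,3,2,1,0]]),
 ([3,3,3,0,0],[[3,3,3,0,0]])]"

definition leading_terms_2 :: "(mono \<times> nat \<times> mono) list" where
  "leading_terms_2 = [([0,2,1,3,3],1,[0,1,1,3,3]),
 ([0,2,3,1,3],1,[0,1,3,1,3]),
 ([0,2,3,3,1],1,[0,1,3,3,1]),
 ([0,3,2,1,3],1,[0,3,1,1,3]),
 ([0,3,2,3,1],1,[0,3,1,3,1]),
 ([0,3,3,2,1],1,[0,3,3,1,1]),
 ([2,0,1,3,3],1,[1,0,1,3,3]),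
 ([2,0,3,1,3],1,[1,0,3,1,3]),
 ([2,0,3,3,1],1,[1,0,3,3,1]),
 ([2,1,0,3,3],1,[1,1,0,3,3]),
 ([2,1,1,2,3],1,[1,1,1,2,3]),
 ([2,1,1,3,2],1,[1,1,1,3,2]),
 ([2,1,2,1,3],1,[1,1,2,1,3]),
 ([2,1,2,3,1],1,[1,1,2,3,1]),
 ([2,1,3,0,3],1,[1,1,3,0,3]),
 ([2,1,3,1,2],1,[1,1,3,1,2]),
 ([2,1,3,2,1],1,[1,1,3,2,1]),
 ([2,1,3,3,0],1,[1,1,3,3,0]),
 ([2,2,1,1,3],1,[1,2,1,1,3]),
 ([2,2,1,3,1],1,[1,2,1,3,1]),
 ([2,2,3,1,1],1,[1,2,3,1,1]),
 ([2,3,0,1,3],1,[1,3,0,1,3]),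
 ([2,3,0,3,1],1,[1,3,0,3,1]),
 ([2,3,1,0,3],1,[1,3,1,0,3]),
 ([2,3,1,1,2],1,[1,3,1,1,2]),
 ([2,3,1,2,1],1,[1,3,1,2,1]),
 ([2,3,1,3,0],1,[1,3,1,3,0]),
 ([2,3,2,1,1],1,[1,3,2,1,1]),
 ([2,3,3,0,1],1,[1,3,3,0,1]),
 ([2,3,3,1,0],1,[1,3,3,1,0]),
 ([3,0,2,1,3],1,[3,0,1,1,3]),
 ([3,0,2,3,1],1,[3,0,1,3,1]),
 ([3,0,3,2,1],1,[3,0,3,1,1]),
 ([3,2,0,1,3],1,[3,1,0,1,3]),
 ([3,2,0,3,1],1,[3,1,0,3,1]),
 ([3,2,1,0,3],1,[3,1,1,0,3]),
 ([3,2,1,1,2],1,[3,1,1,1,2]),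
 ([3,2,1,2,1],1,[3,1,1,2,1]),
 ([3,2,1,3,0],1,[3,1,1,3,0]),
 ([3,2,2,1,1],1,[3,1,2,1,1]),
 ([3,2,3,0,1],1,[3,1,3,0,1]),
 ([3,2,3,1,0],1,[3,1,3,1,0]),
 ([3,3,0,2,1],1,[3,3,0,1,1]),
 ([3,3,2,0,1],1,[3,3,1,0,1]),
 ([3,3,2,1,0],1,[3,3,1,1,0])]"

lemma admissible_of_weight_3_1:
  "admissible_of_weight (w3 1) = set (map fst dual_witnesses_1) \<and>
   QP5dim (w3 1) = card (set (map fst dual_witnesses_1))"
  by (rule admissible_of_weight_certified[where B = 1 and N = 4 and d = 3 and LT = "[]"])
    (simp_all add: wdeg_w3 w3_apply dual_witnesses_1_def certificate_evaluation del: sq_list.simps(2))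

lemma admissible_of_weight_3_2:
  "admissible_of_weight (w3 2) = set (map fst dual_witnesses_2) \<and>
   QP5dim (w3 2) = card (set (map fst dual_witnesses_2))"
  by (rule admissible_of_weight_certified[where B = 2 and N = 4 and d = 9 and LT = leading_terms_2])
    (simp_all add: wdeg_w3 w3_apply dual_witnesses_2_def leading_terms_2_def certificate_evaluation
      del: sq_list.simps(2))

lemma Xab_enumeration: "{Xab a b | a b. 1 \<le> a \<and> a < b \<and> b \<le> 5} = set (map fst dual_witnesses_1)"
proof -
  let ?X = "[Xab 1 2, Xab 1 3, Xab 1 4, Xab 1 5, Xab 2 3, Xab 2 4, Xab 2 5, Xab 3 4, Xab 3 5, Xab 4 5]"
  have "{Xab a b | a b. 1 \<le> a \<and> a < b \<and> b \<le> 5} = set ?X"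
  proof (intro set_eqI iffI)
    fix x assume "x \<in> {Xab a b | a b. 1 \<le> a \<and> a < b \<and> b \<le> 5}"
    then obtain a b where x: "x = Xab a b" "1 \<le> a" "a < b" "b \<le> 5" by blast
    then have "a \<in> {1, 2, 3, 4}" "b \<in> {2, 3, 4, 5}" by auto
    then show "x \<in> set ?X" using x by auto
  qed force
  also have "\<dots> = set (map fst dual_witnesses_1)"
    by (simp add: Xab_def dual_witnesses_1_def upt_rec_plus_1)
  finally show ?thesis .
qed

lemma admissible_positive_3_2:
  "{x. admissible x \<and> weight x = w3 2 \<and> (\<forall>j<5. 0 < x ! j)} =
   set (filter (list_all ((<) 0)) (map fst dual_witnesses_2))"
proof -
  have "(\<forall>j<5. 0 < x ! j) \<longleftrightarrow> list_all ((<) 0) x" if "admissible x" for x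
    using that by (simp add: admissible_def list_all_length)
  then show ?thesis using admissible_of_weight_3_2 by auto
qed

theorem proposition4:
  shows "{x. admissible x \<and> weight x = w3 1} = {Xab a b | a b. 1 \<le> a \<and> a < b \<and> b \<le> 5}
       \<and> QP5dim (w3 1) = 10
       \<and> {x. admissible x \<and> weight x = w3 2 \<and> (\<forall>j<5. 0 < x!j)} =
           {[1,1,2,2,3], [1,1,2,3,2], [1,1,3,2,2], [1,2,1,2,3], [1,2,1,3,2],
            [1,2,2,1,3], [1,2,2,3,1], [1,2,3,1,2], [1,2,3,2,1], [1,3,1,2,2],
            [1,3,2,1,2], [1,3,2,2,1], [3,1,1,2,2], [3,1,2,1,2], [3,1,2,2,1]}
       \<and> QP5dim (w3 2) = 55"
proof (intro conjI)
  show "{x. admissible x \<and> weight x = w3 1} = {Xab a b | a b. 1 \<le> a \<and> a < b \<and> b \<le> 5}"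
    using admissible_of_weight_3_1 Xab_enumeration by simp
  show "QP5dim (w3 1) = 10"
    using admissible_of_weight_3_1 by (simp add: dual_witnesses_1_def)
  show "{x. admissible x \<and> weight x = w3 2 \<and> (\<forall>j<5. 0 < x!j)} =
      {[1,1,2,2,3], [1,1,2,3,2], [1,1,3,2,2], [1,2,1,2,3], [1,2,1,3,2],
       [1,2,2,1,3], [1,2,2,3,1], [1,2,3,1,2], [1,2,3,2,1], [1,3,1,2,2],
       [1,3,2,1,2], [1,3,2,2,1], [3,1,1,2,2], [3,1,2,1,2], [3,1,2,2,1]}"
    unfolding admissible_positive_3_2 by (simp add: dual_witnesses_2_def)
  show "QP5dim (w3 2) = 55"
    using admissible_of_weight_3_2 by (simp add: dual_witnesses_2_def)
qed

end
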